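(* Assume $\langle f\rangle_X=0$ and that $\psi$ satisfies (A1) and (A2), let $u^H$ be the solution of the HQC problem and $u^{H,c}$ its reconstruction. Then for every $k$ and every $X_i\in S_k$, \[ u^{H,c}(X_i)=u^H(X_i)+\epsilon\,\chi(X_{i_k^{\rm coll}},X_i/\epsilon)\,Du^H(X_i). \]
   Context: Let $\epsilon>0$, $N,p$ positive integers, $N\epsilon=1$; $X_i=\epsilon i$, $Y_j=j$. $U^N_{\rm per}(\epsilon\mathbb Z)$: functions $u:\epsilon\mathbb Z\to\mathbb R$ with $u(X_{i+N})=u(X_i)$; $U^N_\#(\epsilon\mathbb Z)$: those with $\langle u\rangle_X:=\frac1N\sum_{i=1}^Nu(X_i)=0$. $\langle u,v\rangle_X=\frac1N\sum_{i=1}^Nu(X_i)v(X_i)$, $Du(X_i)=(u(X_{i+1})-u(X_i))/\epsilon$. $U^p_\#(\epsilon\mathbb Z)$: $p$-periodic functions on $\epsilon\mathbb Z$ with $\sum_{i=1}^pw(X_i)=0$. Two-scale functions $g:\epsilon\mathbb Z\times\mathbb Z\to\mathbb R$ satisfy $g(X_{i+N},Y_j)=g(X_i,Y_j)=g(X_i,Y_{j+p})$; $D_Xg(X_i,Y_j)=(g(X_{i+1},Y_j)-g(X_i,Y_j))/\epsilon$, $D_Yg(X_i,Y_j)=g(X_i,Y_{j+1})-g(X_i,Y_j)$, $\|g\|_{L^\infty(N,p)}=\max_{1\le i\le N,1\le j\le p}|g|$. $\psi$ is a two-scale function with (A1) $0<c_\psi\le\psi\le C_\psi$ and (A2) $\|D_X\psi\|_{L^\infty(N,p)}\le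 C'_\psi$. The cell solution $\chi$ is the two-scale function with $\frac1p\sum_{j=1}^p\chi(X_i,Y_j)=0$ and $-D_Y(\psi D_Y\chi)=D_Y\psi$ everywhere. $f\in U^N_{\rm per}(\epsilon\mathbb Z)$. HQC method: indices $1=i_1<\dots<i_K\le N$, $i_{K+1}=N+1$, $S_k=\{X_i:i_k\le i<i_{k+1}\}$, $H_k=\epsilon(i_{k+1}-i_k)$. $U^H_{\rm per}$: $v\in U^N_{\rm per}(\epsilon\mathbb Z)$ affine on each $\{X_i:i_k\le i\le i_{k+1}\}$; $U^H_\#=U^H_{\rm per}\cap U^N_\#(\epsilon\mathbb Z)$. Sampling domains $S_k^{\rm rep}=\{X_i:i_k^{\rm rep}\le i<i_k^{\rm rep}+p\}\subset S_k$, collocation indices with $X_{i_k^{\rm coll}}\in S_k^{\rm rep}$, $\psi^\epsilon_{{\rm coll},k}(X_i)=\psi(X_{i_k^{\rm coll}},X_i/\epsilon)$, $\langle a,b\rangle_{S_k^{\rm rep}}=\frac1p\sum_{X_i\in S_k^{\rm rep}}a(X_i)b(X_i)$. For $v^H\in U^H_{\rm per}$ let $\ell_k$ be the affine function on $\epsilon\mathbb Z$ equal to $v^H$ on $S_k$; $\mathcal R_k(v^H)=\ell_k+w_k$ with $w_k\in U^p_\#(\epsilon\mathbb Z)$ such that $\langle\psi^\epsilon_{{\rm coll},k}D(\ell_k+w_k),Ds\rangle_{S_k^{\rm rep}}=0$ for all $s\in U^p_\#(\epsilon\mathbb Z)$. HQC problem: $u^H\in U^H_\#$ with $\sum_{k=1}^KH_k\langle\psi^\epsilon_{{\rm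 coll},k}D\mathcal R_k(u^H),D\mathcal R_k(v^H)\rangle_{S_k^{\rm rep}}=\langle f,v^H\rangle_X$ for all $v^H\in U^H_\#$. The reconstruction is $u^{H,c}(X_i)=u^H(X_i)+w_k(X_i)$ for $X_i\in S_k$, with $w_k=\mathcal R_k(u^H)-\ell_k$ computed for $u^H$. *)

theory Defs
  imports Main "HOL.Real"
begin

text \<open>Grid functions on eps Z are represented as functions int => real, u i = u(X_i).
  Two-scale functions are int => int => real, g i j = g(X_i, Y_j).\<close>

definition Dd :: "real \<Rightarrow> (int \<Rightarrow> real) \<Rightarrow> int \<Rightarrow> real" where
  "Dd eps u i = (u (i + 1) - u i) / eps"

definition per :: "int \<Rightarrow> (int \<Rightarrow> real) \<Rightarrow> bool" where
  "per n u = (\<forall>i. u (i + n) = u i)"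

definition meanX :: "nat \<Rightarrow> (int \<Rightarrow> real) \<Rightarrow> real" where
  "meanX N u = (1 / real N) * (\<Sum>i = 1..int N. u i)"

definition innerX :: "nat \<Rightarrow> (int \<Rightarrow> real) \<Rightarrow> (int \<Rightarrow> real) \<Rightarrow> real" where
  "innerX N u v = (1 / real N) * (\<Sum>i = 1..int N. u i * v i)"

definition UNper :: "nat \<Rightarrow> (int \<Rightarrow> real) set" where
  "UNper N = {u. per (int N) u}"

definition UNsharp :: "nat \<Rightarrow> (int \<Rightarrow> real) set" where
  "UNsharp N = {u \<in> UNper N. meanX N u = 0}"

definition Upsharp :: "nat \<Rightarrow> (int \<Rightarrow> real) set" where
  "Upsharp p = {w. per (int p) w \<and> (\<Sum>i = 1..int p. w i) = 0}"

definition twoscale :: "nat \<Rightarrow> nat \<Rightarrow> (int \<Rightarrow> int \<Rightarrow> real) \<Rightarrow> bool" where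
  "twoscale N p g = (\<forall>i j. g (i + int N) j = g i j \<and> g i (j + int p) = g i j)"

definition DX :: "real \<Rightarrow> (int \<Rightarrow> int \<Rightarrow> real) \<Rightarrow> int \<Rightarrow> int \<Rightarrow> real" where
  "DX eps g i j = (g (i + 1) j - g i j) / eps"

definition DY :: "(int \<Rightarrow> int \<Rightarrow> real) \<Rightarrow> int \<Rightarrow> int \<Rightarrow> real" where
  "DY g i j = g i (j + 1) - g i j"

definition Linf :: "nat \<Rightarrow> nat \<Rightarrow> (int \<Rightarrow> int \<Rightarrow> real) \<Rightarrow> real" where
  "Linf N p g = Max {\<bar>g i j\<bar> | i j. i \<in> {1..int N} \<and> j \<in> {1..int p}}"

definition cell_solution :: "nat \<Rightarrow> nat \<Rightarrow> (int \<Rightarrow> int \<Rightarrow> real) \<Rightarrow> (int \<Rightarrow> int \<Rightarrow> real) \<Rightarrow> bool" where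
  "cell_solution N p psi chi =
     (twoscale N p chi \<and>
      (\<forall>i. (1 / real p) * (\<Sum>j = 1..int p. chi i j) = 0) \<and>
      (\<forall>i j. - DY (\<lambda>a b. psi a b * DY chi a b) i j = DY psi i j))"

text \<open>HQC partition: idx k = i_k for k = 1..K+1.\<close>
definition hqc_partition :: "nat \<Rightarrow> nat \<Rightarrow> (nat \<Rightarrow> int) \<Rightarrow> bool" where
  "hqc_partition N K idx =
     (1 \<le> K \<and> idx 1 = 1 \<and> (\<forall>k \<in> {1..K}. idx k < idx (Suc k)) \<and>
      idx K \<le> int N \<and> idx (Suc K) = int N + 1)"

definition Sk :: "(nat \<Rightarrow> int) \<Rightarrow> nat \<Rightarrow> int set" where
  "Sk idx k = {i. idx k \<le> i \<and> i < idx (Suc k)}"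

definition Hk :: "real \<Rightarrow> (nat \<Rightarrow> int) \<Rightarrow> nat \<Rightarrow> real" where
  "Hk eps idx k = eps * real_of_int (idx (Suc k) - idx k)"

definition UHper :: "nat \<Rightarrow> real \<Rightarrow> nat \<Rightarrow> (nat \<Rightarrow> int) \<Rightarrow> (int \<Rightarrow> real) set" where
  "UHper N eps K idx = {v \<in> UNper N. \<forall>k \<in> {1..K}. \<exists>a b. \<forall>i.
      idx k \<le> i \<and> i \<le> idx (Suc k) \<longrightarrow> v i = a + b * (eps * real_of_int i)}"

definition UHsharp :: "nat \<Rightarrow> real \<Rightarrow> nat \<Rightarrow> (nat \<Rightarrow> int) \<Rightarrow> (int \<Rightarrow> real) set" where
  "UHsharp N eps K idx = UHper N eps K idx \<inter> UNsharp N"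

text \<open>Sampling domains S_k^rep = {X_i : irep k <= i < irep k + p} and collocation indices.\<close>
definition sampling :: "nat \<Rightarrow> nat \<Rightarrow> (nat \<Rightarrow> int) \<Rightarrow> (nat \<Rightarrow> int) \<Rightarrow> (nat \<Rightarrow> int) \<Rightarrow> bool" where
  "sampling p K idx irep coll =
     (\<forall>k \<in> {1..K}. idx k \<le> irep k \<and> irep k + int p \<le> idx (Suc k) \<and>
                    irep k \<le> coll k \<and> coll k < irep k + int p)"

definition inner_rep :: "nat \<Rightarrow> (nat \<Rightarrow> int) \<Rightarrow> nat \<Rightarrow> (int \<Rightarrow> real) \<Rightarrow> (int \<Rightarrow> real) \<Rightarrow> real" where
  "inner_rep p irep k a b = (1 / real p) * (\<Sum>i = irep k..irep k + int p - 1. a i * b i)"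

text \<open>psi_coll,k(X_i) = psi(X_{coll k}, X_i/eps) = psi (coll k) i.\<close>
definition psi_coll :: "(int \<Rightarrow> int \<Rightarrow> real) \<Rightarrow> (nat \<Rightarrow> int) \<Rightarrow> nat \<Rightarrow> int \<Rightarrow> real" where
  "psi_coll psi coll k i = psi (coll k) i"

definition ell :: "(nat \<Rightarrow> int) \<Rightarrow> (int \<Rightarrow> real) \<Rightarrow> nat \<Rightarrow> int \<Rightarrow> real" where
  "ell idx v k i = v (idx k) + real_of_int (i - idx k) *
      (v (idx (Suc k)) - v (idx k)) / real_of_int (idx (Suc k) - idx k)"

definition corrector :: "real \<Rightarrow> nat \<Rightarrow> (int \<Rightarrow> int \<Rightarrow> real) \<Rightarrow> (nat \<Rightarrow> int) \<Rightarrow> (nat \<Rightarrow> int)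
    \<Rightarrow> (nat \<Rightarrow> int) \<Rightarrow> nat \<Rightarrow> (int \<Rightarrow> real) \<Rightarrow> int \<Rightarrow> real" where
  "corrector eps p psi idx irep coll k v =
     (THE w. w \<in> Upsharp p \<and>
        (\<forall>s \<in> Upsharp p. inner_rep p irep k
            (\<lambda>i. psi_coll psi coll k i * Dd eps (\<lambda>j. ell idx v k j + w j) i) (Dd eps s) = 0))"

definition Rk :: "real \<Rightarrow> nat \<Rightarrow> (int \<Rightarrow> int \<Rightarrow> real) \<Rightarrow> (nat \<Rightarrow> int) \<Rightarrow> (nat \<Rightarrow> int)
    \<Rightarrow> (nat \<Rightarrow> int) \<Rightarrow> nat \<Rightarrow> (int \<Rightarrow> real) \<Rightarrow> int \<Rightarrow> real" where
  "Rk eps p psi idx irep coll k v i = ell idx v k i + corrector eps p psi idx irep coll k v i"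

definition hqc_solution :: "nat \<Rightarrow> real \<Rightarrow> nat \<Rightarrow> (int \<Rightarrow> int \<Rightarrow> real) \<Rightarrow> nat \<Rightarrow> (nat \<Rightarrow> int)
    \<Rightarrow> (nat \<Rightarrow> int) \<Rightarrow> (nat \<Rightarrow> int) \<Rightarrow> (int \<Rightarrow> real) \<Rightarrow> (int \<Rightarrow> real) \<Rightarrow> bool" where
  "hqc_solution N eps p psi K idx irep coll f u =
     (u \<in> UHsharp N eps K idx \<and>
      (\<forall>v \<in> UHsharp N eps K idx.
         (\<Sum>k = 1..K. Hk eps idx k *
            inner_rep p irep k
              (\<lambda>i. psi_coll psi coll k i * Dd eps (Rk eps p psi idx irep coll k u) i)
              (Dd eps (Rk eps p psi idx irep coll k v))) = innerX N f v))"

definition recon :: "real \<Rightarrow> nat \<Rightarrow> (int \<Rightarrow> int \<Rightarrow> real) \<Rightarrow> nat \<Rightarrow> (nat \<Rightarrow> int) \<Rightarrow> (nat \<Rightarrow> int)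
    \<Rightarrow> (nat \<Rightarrow> int) \<Rightarrow> (int \<Rightarrow> real) \<Rightarrow> int \<Rightarrow> real" where
  "recon eps p psi K idx irep coll u i =
     u i + corrector eps p psi idx irep coll (THE k. k \<in> {1..K} \<and> i \<in> Sk idx k) u i"

end

theory Submission
  imports Defs
begin

text \<open>On a block \<open>S\<^sub>k\<close> where \<open>u\<^sup>H\<close> has slope \<open>b\<close>, the candidate corrector
  \<open>w = \<epsilon> b \<chi>(X\<^sub>coll, \<cdot>)\<close> is \<open>p\<close>-periodic with zero mean, and by the cell equation
  the flux \<open>\<psi>(X\<^sub>coll, \<cdot>) D(\<ell>\<^sub>k + w) = b \<psi> (1 + D\<^sub>Y\<chi>)\<close> is constant.  A constant
  flux is orthogonal to the difference quotient of every \<open>p\<close>-periodic function, since such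
  difference quotients telescope to zero over a period.  So \<open>w\<close> solves the local cell problem,
  whose solution is unique because \<open>\<psi> > 0\<close> makes the local energy definite on zero-mean
  periodic functions.\<close>

lemma per_add_mult:
  assumes "per n u"
  shows "u (i + m * n) = u i"
proof (induction m rule: int_induct[where k = 0])
  case base
  then show ?case by simp
next
  case (step1 m)
  have "u (i + (m + 1) * n) = u ((i + m * n) + n)" by (simp add: algebra_simps)
  also have "\<dots> = u (i + m * n)" using assms unfolding per_def by blast
  finally show ?case using step1 by simp
next
  case (step2 m)
  have "u (i + m * n) = u ((i + (m - 1) * n) + n)" by (simp add: algebra_simps)
  also have "\<dots> = u (i + (m - 1) * n)" using assms unfolding per_def by blast
  finally show ?case using step2 by simp
qed

lemma shift_invariant_const:
  assumes "\<forall>j. g (j + 1) = g (j :: int)"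
  shows "g j = g 0"
proof (induction j rule: int_induct[where k = 0])
  case base
  then show ?case by simp
next
  case (step1 m)
  then show ?case using assms by metis
next
  case (step2 m)
  then show ?case using assms[rule_format, of "m - 1"] by simp
qed

lemma per_shift_invariant:
  assumes "per (int p) d" and "p > 0"
    and step: "\<forall>i \<in> {r..r + int p - 1}. d (i + 1) = d i"
  shows "d (j + 1) = d j"
proof -
  define j' where "j' = r + (j - r) mod int p"
  define m where "m = (j - r) div int p"
  have j: "j = j' + m * int p"
    unfolding j'_def m_def by (simp add: algebra_simps mod_div_mult_eq[symmetric])
  have "j' \<in> {r..r + int p - 1}"
    unfolding j'_def using \<open>p > 0\<close> by (simp add: pos_mod_bound pos_mod_sign)
  have "d (j + 1) = d ((j' + 1) + m * int p)" using j by (simp add: algebra_simps)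
  also have "\<dots> = d j'" using per_add_mult[OF assms(1)] step \<open>j' \<in> _\<close> by simp
  also have "\<dots> = d j" using j per_add_mult[OF assms(1)] by metis
  finally show ?thesis .
qed

lemma Upsharp_shift_invariant_eq_0:
  assumes "d \<in> Upsharp p" and "p > 0" and "\<forall>j. d (j + 1) = d j"
  shows "d = (\<lambda>_. 0)"
proof -
  have const: "d j = d 0" for j using shift_invariant_const[OF assms(3)] .
  have "real p * d 0 = (\<Sum>i = 1..int p. d 0)" by simp
  also have "\<dots> = (\<Sum>i = 1..int p. d i)" by (intro sum.cong refl) (rule const[symmetric])
  also have "\<dots> = 0" using assms(1) unfolding Upsharp_def by simp
  finally show ?thesis using const \<open>p > 0\<close> by auto
qed

lemma sum_diff_telescope_int:
  "(\<Sum>i = r..r + int m - 1. s (i + 1) - s i) = s (r + int m) - (s r :: real)"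
proof (induction m)
  case 0
  then show ?case by simp
next
  case (Suc m)
  have "{r..r + int (Suc m) - 1} = insert (r + int m) {r..r + int m - 1}" by auto
  then show ?case using Suc by (simp add: algebra_simps)
qed

lemma sum_Dd_period_eq_0:
  assumes "per (int p) s"
  shows "(\<Sum>i = r..r + int p - 1. Dd eps s i) = 0"
proof -
  have "(\<Sum>i = r..r + int p - 1. Dd eps s i) = (\<Sum>i = r..r + int p - 1. s (i + 1) - s i) / eps"
    unfolding Dd_def by (simp add: sum_divide_distrib)
  also have "\<dots> = 0"
    using assms unfolding sum_diff_telescope_int per_def by simp
  finally show ?thesis .
qed

definition solves_local_cell_problem ::
    "real \<Rightarrow> nat \<Rightarrow> (int \<Rightarrow> real) \<Rightarrow> (nat \<Rightarrow> int) \<Rightarrow> nat \<Rightarrow> (int \<Rightarrow> real) \<Rightarrow> (int \<Rightarrow> real) \<Rightarrow> bool"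
  where "solves_local_cell_problem eps p a irep k L w \<longleftrightarrow> w \<in> Upsharp p \<and>
     (\<forall>s \<in> Upsharp p. inner_rep p irep k (\<lambda>i. a i * Dd eps (\<lambda>j. L j + w j) i) (Dd eps s) = 0)"

lemma corrector_eq_The:
  "corrector eps p psi idx irep coll k v =
     (THE w. solves_local_cell_problem eps p (psi_coll psi coll k) irep k (ell idx v k) w)"
  unfolding corrector_def solves_local_cell_problem_def ..

lemma Dd_diff: "Dd eps (\<lambda>j. u j - v j) i = Dd eps u i - Dd eps v i"
  unfolding Dd_def by (simp add: diff_divide_distrib)

lemma local_cell_problem_unique:
  assumes "eps \<noteq> 0" and "p > 0" and a_pos: "\<forall>i. a i > 0"
    and wa: "solves_local_cell_problem eps p a irep k L wa"
    and wb: "solves_local_cell_problem eps p a irep k L wb"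
  shows "wa = wb"
proof -
  define d where "d = (\<lambda>j. wa j - wb j)"
  let ?I = "{irep k..irep k + int p - 1}"
  have d: "d \<in> Upsharp p"
    using wa wb unfolding solves_local_cell_problem_def Upsharp_def per_def d_def
    by (simp add: sum_subtractf)
  have Dd_d: "Dd eps d i = Dd eps (\<lambda>j. L j + wa j) i - Dd eps (\<lambda>j. L j + wb j) i" for i
    unfolding d_def Dd_diff[symmetric] by simp
  \<comment> \<open>subtract the two orthogonality relations, both tested with \<open>s = d\<close>\<close>
  have "a i * Dd eps (\<lambda>j. L j + wa j) i * Dd eps d i - a i * Dd eps (\<lambda>j. L j + wb j) i * Dd eps d i
      = a i * Dd eps d i * Dd eps d i" for i
    by (simp add: Dd_d algebra_simps)
  then have "inner_rep p irep k (\<lambda>i. a i * Dd eps d i) (Dd eps d) =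
      inner_rep p irep k (\<lambda>i. a i * Dd eps (\<lambda>j. L j + wa j) i) (Dd eps d) -
      inner_rep p irep k (\<lambda>i. a i * Dd eps (\<lambda>j. L j + wb j) i) (Dd eps d)"
    unfolding inner_rep_def right_diff_distrib[symmetric] sum_subtractf[symmetric] by simp
  also have "\<dots> = 0"
    using wa wb d unfolding solves_local_cell_problem_def by simp
  finally have "inner_rep p irep k (\<lambda>i. a i * Dd eps d i) (Dd eps d) = 0" .
  then have "(\<Sum>i\<in>?I. a i * (Dd eps d i)\<^sup>2) = 0"
    using \<open>p > 0\<close> unfolding inner_rep_def by (simp add: power2_eq_square mult.assoc)
  moreover have "0 \<le> a i * (Dd eps d i)\<^sup>2" for i
    using a_pos by (simp add: less_imp_le)
  ultimately have "\<forall>i\<in>?I. a i * (Dd eps d i)\<^sup>2 = 0"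
    using sum_nonneg_eq_0_iff[of ?I "\<lambda>i. a i * (Dd eps d i)\<^sup>2"] by blast
  then have "\<forall>i\<in>?I. Dd eps d i = 0"
    using a_pos by (simp add: less_imp_neq[symmetric])
  then have "\<forall>i\<in>?I. d (i + 1) = d i"
    using \<open>eps \<noteq> 0\<close> unfolding Dd_def by simp
  then have "\<forall>j. d (j + 1) = d j"
    using per_shift_invariant[of p d] d \<open>p > 0\<close> unfolding Upsharp_def by blast
  then have "d = (\<lambda>_. 0)" using Upsharp_shift_invariant_eq_0 d \<open>p > 0\<close> by blast
  then show ?thesis unfolding d_def by (simp add: fun_eq_iff)
qed

lemma corrector_eqI:
  assumes "eps \<noteq> 0" and "p > 0" and "\<forall>i j. psi i j > 0"
    and "solves_local_cell_problem eps p (psi_coll psi coll k) irep k (ell idx v k) w"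
  shows "corrector eps p psi idx irep coll k v = w"
  unfolding corrector_eq_The using assms
  by (intro the_equality local_cell_problem_unique[of eps p "psi_coll psi coll k"])
     (auto simp: psi_coll_def)

lemma cell_flux_const:
  assumes "cell_solution N p psi chi"
  shows "psi i j * (1 + DY chi i j) = psi i 0 * (1 + DY chi i 0)"
proof -
  have "\<forall>j. psi i (j + 1) * (1 + DY chi i (j + 1)) = psi i j * (1 + DY chi i j)"
    using assms unfolding cell_solution_def DY_def by (simp add: algebra_simps)
  then show ?thesis using shift_invariant_const[of "\<lambda>j. psi i j * (1 + DY chi i j)"] by blast
qed

lemma cell_solution_Upsharp:
  assumes "cell_solution N p psi chi" and "p > 0"
  shows "(\<lambda>j. c * chi i j) \<in> Upsharp p"
  using assms unfolding cell_solution_def twoscale_def Upsharp_def per_def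
  by (simp add: sum_distrib_left[symmetric])

lemma Dd_ell:
  "Dd eps (ell idx v k) j =
     (v (idx (Suc k)) - v (idx k)) / (eps * real_of_int (idx (Suc k) - idx k))"
proof -
  have "ell idx v k (j + 1) - ell idx v k j =
      (v (idx (Suc k)) - v (idx k)) / real_of_int (idx (Suc k) - idx k)"
    unfolding ell_def by (simp add: diff_divide_distrib[symmetric] algebra_simps)
  then show ?thesis unfolding Dd_def by (simp add: mult.commute)
qed

lemma corrector_cell_solution:
  assumes "eps \<noteq> 0" and "p > 0" and psi_pos: "\<forall>i j. psi i j > 0"
    and chi: "cell_solution N p psi chi"
    and slope: "\<forall>j. Dd eps (ell idx v k) j = b"
  shows "corrector eps p psi idx irep coll k v = (\<lambda>j. eps * b * chi (coll k) j)"
proof (rule corrector_eqI[OF assms(1-3)])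
  let ?w = "\<lambda>j. eps * b * chi (coll k) j"
  let ?F = "b * (psi (coll k) 0 * (1 + DY chi (coll k) 0))"
  have flux: "psi_coll psi coll k i * Dd eps (\<lambda>j. ell idx v k j + ?w j) i = ?F" for i
  proof -
    have "Dd eps (\<lambda>j. ell idx v k j + ?w j) i = b * (1 + DY chi (coll k) i)"
      using slope[rule_format, of i] \<open>eps \<noteq> 0\<close> unfolding Dd_def DY_def
      by (simp add: field_simps)
    then show ?thesis
      using cell_flux_const[OF chi, of "coll k" i] unfolding psi_coll_def by simp
  qed
  have "inner_rep p irep k (\<lambda>i. psi_coll psi coll k i * Dd eps (\<lambda>j. ell idx v k j + ?w j) i)
          (Dd eps s) = 0" if "s \<in> Upsharp p" for s
    using sum_Dd_period_eq_0[where r = "irep k" and eps = eps] that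
    unfolding inner_rep_def flux Upsharp_def by (simp add: sum_distrib_left[symmetric])
  then show "solves_local_cell_problem eps p (psi_coll psi coll k) irep k (ell idx v k) ?w"
    unfolding solves_local_cell_problem_def using cell_solution_Upsharp[OF chi \<open>p > 0\<close>] by blast
qed

lemma hqc_partition_mono:
  assumes "hqc_partition N K idx" and "1 \<le> m" and "m \<le> n" and "n \<le> Suc K"
  shows "idx m \<le> idx n"
  using assms(3,4)
proof (induction n)
  case 0
  then show ?case using assms(2) by simp
next
  case (Suc n)
  show ?case
  proof (cases "m = Suc n")
    case False
    then have "m \<le> n" using Suc by simp
    moreover have "idx n < idx (Suc n)"
      using Suc assms(1,2) \<open>m \<le> n\<close> unfolding hqc_partition_def by simp
    ultimately have "idx m < idx (Suc n)" using Suc by fastforce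
    then show ?thesis by simp
  qed simp
qed

lemma hqc_partition_block_unique:
  assumes "hqc_partition N K idx" and "k \<in> {1..K}" and "i \<in> Sk idx k"
  shows "(THE k'. k' \<in> {1..K} \<and> i \<in> Sk idx k') = k"
proof (rule the_equality)
  fix k' assume k': "k' \<in> {1..K} \<and> i \<in> Sk idx k'"
  have "\<not> k' < k" and "\<not> k < k'"
    using hqc_partition_mono[OF assms(1), of "Suc k'" k] hqc_partition_mono[OF assms(1), of "Suc k" k']
      assms(2,3) k' unfolding Sk_def by auto
  then show "k' = k" by simp
qed (use assms in simp)

theorem lemma6p5:
  fixes N p K :: nat and eps c_psi C_psi C'_psi :: real
    and psi chi :: "int \<Rightarrow> int \<Rightarrow> real" and f u :: "int \<Rightarrow> real"
    and idx irep coll :: "nat \<Rightarrow> int"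
  assumes eps_pos: "eps > 0" and N_pos: "N > 0" and p_pos: "p > 0"
    and Neps: "real N * eps = 1"
    and psi_ts: "twoscale N p psi"
    and A1: "0 < c_psi" "\<forall>i j. c_psi \<le> psi i j \<and> psi i j \<le> C_psi"
    and A2: "Linf N p (DX eps psi) \<le> C'_psi"
    and chi: "cell_solution N p psi chi"
    and f_per: "f \<in> UNper N" and f_mean: "meanX N f = 0"
    and part: "hqc_partition N K idx"
    and samp: "sampling p K idx irep coll"
    and sol: "hqc_solution N eps p psi K idx irep coll f u"
  shows "\<forall>k \<in> {1..K}. \<forall>i \<in> Sk idx k.
           recon eps p psi K idx irep coll u i = u i + eps * chi (coll k) i * Dd eps u i"
proof (intro ballI)
  fix k i assume k: "k \<in> {1..K}" and i: "i \<in> Sk idx k"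
  have psi_pos: "\<forall>i j. psi i j > 0" using A1 by (meson less_le_trans)
  obtain a b where affine: "\<forall>j. idx k \<le> j \<and> j \<le> idx (Suc k) \<longrightarrow> u j = a + b * (eps * j)"
    using sol k unfolding hqc_solution_def UHsharp_def UHper_def by blast
  have block: "idx k < idx (Suc k)" using part k unfolding hqc_partition_def by auto
  have "Dd eps u i = b"
    using affine i eps_pos unfolding Dd_def Sk_def by (simp add: algebra_simps)
  moreover have "u (idx (Suc k)) - u (idx k) = b * (eps * real_of_int (idx (Suc k) - idx k))"
    using affine block by (simp add: algebra_simps)
  then have "\<forall>j. Dd eps (ell idx u k) j = b"
    using block eps_pos unfolding Dd_ell by simp
  then have "corrector eps p psi idx irep coll k u = (\<lambda>j. eps * b * chi (coll k) j)"
    using corrector_cell_solution[OF _ p_pos psi_pos chi] eps_pos by simp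
  ultimately show "recon eps p psi K idx irep coll u i = u i + eps * chi (coll k) i * Dd eps u i"
    unfolding recon_def hqc_partition_block_unique[OF part k i] by simp
qed

end
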